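(* Let $G$ be a tree with vertices $1,2,\ldots,n$ and edges $e_1,\ldots,e_{n-1}$, and let $M$ be its $n\times(n-1)$ vertex-edge incidence matrix. Define the $(n-1)\times n$ matrix $H=[h_{i,j}]$ (rows indexed by edges, columns by vertices) by $$h_{i,j}=\frac{(-1)^{d(e_i,j)}}{n}\begin{cases}|G_T(e_i)| & \text{if } j\in G_H(e_i),\\ |G_H(e_i)| & \text{if } j\in G_T(e_i).\end{cases}$$ Then $H$ is the Moore-Penrose inverse $M^+$ of $M$.
   Context: Each edge is written $e_i=\{l_i,m_i\}$ with $l_i<m_i$. The incidence matrix $M$ has $(i,j)$-entry $1$ if vertex $i$ is incident with edge $e_j$ and $0$ otherwise. $d(u,v)$ denotes the usual graph distance between vertices; for a vertex $j$ and edge $e_i=\{l_i,m_i\}$, $d(j,e_i)=d(e_i,j):=\min\{d(j,l_i),d(j,m_i)\}$. The head component $G_H(e_i)$ is the connected component of $G\setminus e_i$ containing $m_i$; the tail component $G_T(e_i)$ is the component of $G\setminus e_i$ containing $l_i$. $|X|$ denotes the number of vertices of a graph $X$. The Moore-Penrose inverse of a real $p\times q$ matrix $A$ is the unique $q\times p$ real matrix $A^+$ with $AA^+A=A$, $A^+AA^+=A^+$, $(AA^+)^T=AA^+$, $(A^+A)^T=A^+A$. *)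

theory Defs
  imports "Jordan_Normal_Form.Matrix"
begin

text \<open>A simple graph on vertex set {0..<n} whose edges are given by a list es of pairs (l,m)
  with l < m; edge e_i is es ! i (0-based indices).\<close>

definition adj :: "(nat \<times> nat) list \<Rightarrow> nat \<Rightarrow> nat \<Rightarrow> bool" where
  "adj es u v \<longleftrightarrow> (u, v) \<in> set es \<or> (v, u) \<in> set es"

definition connected_graph :: "nat \<Rightarrow> (nat \<times> nat) list \<Rightarrow> bool" where
  "connected_graph n es \<longleftrightarrow> (\<forall>u<n. \<forall>v<n. (adj es)\<^sup>*\<^sup>* u v)"

definition is_cycle :: "(nat \<times> nat) list \<Rightarrow> nat list \<Rightarrow> bool" where
  "is_cycle es cs \<longleftrightarrow> length cs \<ge> 3 \<and> distinct cs \<and>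
     (\<forall>k. Suc k < length cs \<longrightarrow> adj es (cs ! k) (cs ! Suc k)) \<and>
     adj es (last cs) (hd cs)"

definition is_tree :: "nat \<Rightarrow> (nat \<times> nat) list \<Rightarrow> bool" where
  "is_tree n es \<longleftrightarrow> n \<ge> 1 \<and> distinct es \<and> (\<forall>(l, m) \<in> set es. l < m \<and> m < n)
     \<and> connected_graph n es \<and> \<not> (\<exists>cs. is_cycle es cs)"

definition gdist :: "(nat \<times> nat) list \<Rightarrow> nat \<Rightarrow> nat \<Rightarrow> nat" where
  "gdist es u v = (LEAST k. (adj es ^^ k) u v)"

definition edist :: "(nat \<times> nat) list \<Rightarrow> nat \<Rightarrow> nat \<Rightarrow> nat" where
  "edist es i j = min (gdist es j (fst (es ! i))) (gdist es j (snd (es ! i)))"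

definition del_edge :: "(nat \<times> nat) list \<Rightarrow> nat \<Rightarrow> (nat \<times> nat) list" where
  "del_edge es i = filter (\<lambda>e. e \<noteq> es ! i) es"

definition comp_del :: "nat \<Rightarrow> (nat \<times> nat) list \<Rightarrow> nat \<Rightarrow> nat \<Rightarrow> nat set" where
  "comp_del n es i x = {v. v < n \<and> (adj (del_edge es i))\<^sup>*\<^sup>* x v}"

definition head_comp :: "nat \<Rightarrow> (nat \<times> nat) list \<Rightarrow> nat \<Rightarrow> nat set" where
  "head_comp n es i = comp_del n es i (snd (es ! i))"

definition tail_comp :: "nat \<Rightarrow> (nat \<times> nat) list \<Rightarrow> nat \<Rightarrow> nat set" where
  "tail_comp n es i = comp_del n es i (fst (es ! i))"

definition incidence_mat :: "nat \<Rightarrow> (nat \<times> nat) list \<Rightarrow> real mat" where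
  "incidence_mat n es = mat n (length es)
     (\<lambda>(v, i). if v = fst (es ! i) \<or> v = snd (es ! i) then 1 else 0)"

definition H_mat :: "nat \<Rightarrow> (nat \<times> nat) list \<Rightarrow> real mat" where
  "H_mat n es = mat (length es) n (\<lambda>(i, j).
     (-1) ^ edist es i j / real n *
     (if j \<in> head_comp n es i then real (card (tail_comp n es i))
      else if j \<in> tail_comp n es i then real (card (head_comp n es i)) else 0))"

definition is_moore_penrose_inverse :: "real mat \<Rightarrow> real mat \<Rightarrow> bool" where
  "is_moore_penrose_inverse A B \<longleftrightarrow>
     dim_row B = dim_col A \<and> dim_col B = dim_row A \<and>
     A * B * A = A \<and> B * A * B = B \<and>
     transpose_mat (A * B) = A * B \<and> transpose_mat (B * A) = B * A"

end

theory Submission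
  imports Defs "Jordan_Normal_Form.Determinant" "HOL-Library.Transitive_Closure_Table"
begin

(*
  The vertices of a tree are properly 2-coloured by s v = (-1)^d(0,v). If j lies on the side of the
  endpoint x of e_i = {l, m}, then d(e_i, j) = d(j, x), so h_{i,j} = s j * s x * |other side| / n.
  Since a column of M has its two ones at the endpoints of an edge, and these lie on the same side of
  e_i unless the edge is e_i itself, this gives HM = I; moreover Hs = 0 and s^T M = 0.
  As n = (n - 1) + 1, the square matrix [M | s] is therefore invertible with inverse [H ; s^T / n],
  whence MH = I - s s^T / n. So MH is symmetric, and together with HM = I this yields all four
  Penrose conditions.
*)

lemma mult_left_inverse_eq_one_minus_projection:
  fixes M H :: "'a :: field mat" and s :: "'a vec"
  assumes M: "M \<in> carrier_mat n m" and H: "H \<in> carrier_mat m n" and n: "n = Suc m"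
    and HM: "H * M = 1\<^sub>m m" and Hs: "H *\<^sub>v s = 0\<^sub>v m" and sM: "transpose_mat M *\<^sub>v s = 0\<^sub>v m"
    and s: "s \<in> carrier_vec n" and ss: "s \<bullet> s \<noteq> 0"
  shows "M * H = 1\<^sub>m n - mat n n (\<lambda>(u, v). s $ u * s $ v / (s \<bullet> s))"
proof -
  \<comment> \<open>K is a left inverse of the square matrix N = [M | s], hence also a right inverse;
    the first m columns of N * K = 1 then give the claim.\<close>
  define N where "N = mat n n (\<lambda>(u, c). if c < m then M $$ (u, c) else s $ u)"
  define K where "K = mat n n (\<lambda>(r, v). if r < m then H $$ (r, v) else s $ v / (s \<bullet> s))"
  have "K * N = 1\<^sub>m n"
  proof (rule eq_matI)
    fix r c assume "r < dim_row (1\<^sub>m n)" "c < dim_col (1\<^sub>m n)"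
    then have rc: "r < n" "c < n" by auto
    have KN: "(K * N) $$ (r, c) = (\<Sum>u<n. K $$ (r, u) * N $$ (u, c))"
      using rc by (simp add: K_def N_def scalar_prod_def atLeast0LessThan)
    consider "r < m" "c < m" | "r < m" "c = m" | "r = m" "c < m" | "r = m" "c = m"
      using rc n by linarith
    then show "(K * N) $$ (r, c) = 1\<^sub>m n $$ (r, c)"
    proof cases
      case 1
      then have "(K * N) $$ (r, c) = (H * M) $$ (r, c)"
        using M H rc by (simp add: KN K_def N_def scalar_prod_def atLeast0LessThan)
      then show ?thesis using 1 rc by (simp add: HM)
    next
      case 2
      then have "(K * N) $$ (r, c) = (H *\<^sub>v s) $ r"
        using M H s rc by (simp add: KN K_def N_def scalar_prod_def atLeast0LessThan)
      then show ?thesis using 2 rc by (simp add: Hs)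
    next
      case 3
      then have "(K * N) $$ (r, c) = (transpose_mat M *\<^sub>v s) $ c / (s \<bullet> s)"
        using M H s rc by (simp add: KN K_def N_def scalar_prod_def atLeast0LessThan
            sum_divide_distrib mult.commute)
      then show ?thesis using 3 rc by (simp add: sM)
    next
      case 4
      have "(\<Sum>u<n. s $ u * s $ u) = s \<bullet> s"
        using s by (simp add: scalar_prod_def atLeast0LessThan)
      moreover have "(K * N) $$ (r, c) = (\<Sum>u<n. s $ u * s $ u) / (s \<bullet> s)"
        unfolding KN sum_divide_distrib using rc 4 by (simp add: K_def N_def)
      ultimately show ?thesis using 4 rc ss by simp
    qed
  qed (simp_all add: K_def N_def)
  then have NK: "N * K = 1\<^sub>m n"
    by (rule mat_mult_left_right_inverse[rotated 2]) (simp_all add: K_def N_def)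
  show ?thesis
  proof (rule eq_matI)
    fix u v assume "u < dim_row (1\<^sub>m n - mat n n (\<lambda>(u, v). s $ u * s $ v / (s \<bullet> s)))"
      "v < dim_col (1\<^sub>m n - mat n n (\<lambda>(u, v). s $ u * s $ v / (s \<bullet> s)))"
    then have uv: "u < n" "v < n" by auto
    have "(N * K) $$ (u, v) = (\<Sum>c<Suc m. N $$ (u, c) * K $$ (c, v))"
      using uv n by (simp add: scalar_prod_def atLeast0LessThan K_def N_def)
    also have "\<dots> = (\<Sum>c<m. M $$ (u, c) * H $$ (c, v)) + s $ u * s $ v / (s \<bullet> s)"
      using uv n by (simp add: K_def N_def)
    also have "(\<Sum>c<m. M $$ (u, c) * H $$ (c, v)) = (M * H) $$ (u, v)"
      using M H uv by (simp add: scalar_prod_def atLeast0LessThan)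
    finally show "(M * H) $$ (u, v) = (1\<^sub>m n - mat n n (\<lambda>(u, v). s $ u * s $ v / (s \<bullet> s))) $$ (u, v)"
      using uv by (simp add: NK)
  qed (use M H in auto)
qed

lemma moore_penrose_of_left_inverse:
  assumes M: "M \<in> carrier_mat n m" and H: "H \<in> carrier_mat m n"
    and HM: "H * M = 1\<^sub>m m" and MH_sym: "transpose_mat (M * H) = M * H"
  shows "is_moore_penrose_inverse M H"
proof -
  have "M * H * M = M" using M H HM by (simp add: assoc_mult_mat)
  moreover have "H * M * H = H" using H HM by simp
  ultimately show ?thesis
    using M H HM MH_sym unfolding is_moore_penrose_inverse_def by simp
qed

lemma rtranclp_edge_removed_cases:
  assumes removed: "\<And>u v. R u v \<Longrightarrow> \<not> R' u v \<Longrightarrow> {u, v} = {a, b}" and "R\<^sup>*\<^sup>* x v"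
  shows "R'\<^sup>*\<^sup>* x v \<or> R'\<^sup>*\<^sup>* a v \<or> R'\<^sup>*\<^sup>* b v"
  using assms(2)
proof induction
  case base
  then show ?case by simp
next
  case (step y z)
  show ?case
  proof (cases "R' y z")
    case True
    then show ?thesis using step.IH by (meson rtranclp.rtrancl_into_rtrancl)
  next
    case False
    then have "z \<in> {a, b}" using removed step.hyps(2) by blast
    then show ?thesis by auto
  qed
qed

lemma relpowp_crosses_bridge:
  assumes removed: "\<And>u v. R u v \<Longrightarrow> \<not> R' u v \<Longrightarrow> {u, v} = {a, b}"
    and sym: "symp R'" and separated: "\<not> R'\<^sup>*\<^sup>* a b" and near: "R'\<^sup>*\<^sup>* b j"
    and walk: "(R ^^ k) j v" and far: "R'\<^sup>*\<^sup>* a v"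
  shows "\<exists>k' < k. (R ^^ k') j b"
proof -
  have sym_star: "R'\<^sup>*\<^sup>* y x" if "R'\<^sup>*\<^sup>* x y" for x y
    using that sym by (metis symp_rtranclp sympD)
  show ?thesis
    using walk far
  proof (induction k arbitrary: v)
    case 0
    then have "R'\<^sup>*\<^sup>* a j" by simp
    then have "R'\<^sup>*\<^sup>* a b" using sym_star[OF near] by (rule rtranclp_trans)
    then show ?case using separated by simp
  next
    case (Suc k)
    obtain w where w: "(R ^^ k) j w" "R w v" using Suc.prems(1) by auto
    have "R'\<^sup>*\<^sup>* j w \<or> R'\<^sup>*\<^sup>* a w \<or> R'\<^sup>*\<^sup>* b w"
      using rtranclp_edge_removed_cases[OF removed relpowp_imp_rtranclp[OF w(1)]] .
    then have "R'\<^sup>*\<^sup>* a w \<or> R'\<^sup>*\<^sup>* b w" using near by (metis rtranclp_trans)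
    then show ?case
    proof
      assume "R'\<^sup>*\<^sup>* a w"
      then obtain k' where "k' < k" "(R ^^ k') j b" using Suc.IH[OF w(1)] by blast
      then show ?thesis using less_SucI by blast
    next
      assume bw: "R'\<^sup>*\<^sup>* b w"
      have "\<not> R'\<^sup>*\<^sup>* b a" using separated sym_star by blast
      then have "\<not> R' w v"
        using bw sym_star[OF Suc.prems(2)] by (metis rtranclp.rtrancl_into_rtrancl rtranclp_trans)
      then have "{w, v} = {a, b}" using removed w(2) by blast
      moreover have "w \<noteq> a" using bw \<open>\<not> R'\<^sup>*\<^sup>* b a\<close> by blast
      ultimately have "w = b" by auto
      then show ?thesis using w(1) by blast
    qed
  qed
qed

lemma symp_adj: "symp (adj es)"
  by (auto simp: adj_def intro: sympI)

lemma adj_del_edge_imp_adj: "adj (del_edge es i) u v \<Longrightarrow> adj es u v"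
  by (auto simp: adj_def del_edge_def)

lemma adj_removed_by_del_edge:
  "adj es u v \<Longrightarrow> \<not> adj (del_edge es i) u v \<Longrightarrow> {u, v} = {fst (es ! i), snd (es ! i)}"
  by (cases "es ! i") (auto simp: adj_def del_edge_def)

lemma adj_del_edge_other:
  "distinct es \<Longrightarrow> k < length es \<Longrightarrow> i < length es \<Longrightarrow> k \<noteq> i \<Longrightarrow>
    adj (del_edge es i) (fst (es ! k)) (snd (es ! k))"
  by (auto simp: adj_def del_edge_def nth_eq_iff_index_eq)

lemma finite_comp_del: "finite (comp_del n es i x)"
  by (simp add: comp_del_def)

locale tree =
  fixes n :: nat and es :: "(nat \<times> nat) list"
  assumes is_tree: "is_tree n es"
begin

lemma edge_bounds: "(u, v) \<in> set es \<Longrightarrow> u < v \<and> v < n"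
  using is_tree unfolding is_tree_def by auto

lemma nth_edge_bounds: "i < length es \<Longrightarrow> fst (es ! i) < snd (es ! i) \<and> snd (es ! i) < n"
  using edge_bounds[of "fst (es ! i)" "snd (es ! i)"] by simp

lemma n_pos: "0 < n"
  using is_tree unfolding is_tree_def by simp

lemma adj_connected: "u < n \<Longrightarrow> v < n \<Longrightarrow> (adj es)\<^sup>*\<^sup>* u v"
  using is_tree unfolding is_tree_def connected_graph_def by blast

lemma gdist_walk:
  assumes "u < n" "v < n"
  shows "(adj es ^^ gdist es u v) u v"
proof -
  obtain k where "(adj es ^^ k) u v" using adj_connected[OF assms] rtranclp_imp_relpowp by metis
  then show ?thesis unfolding gdist_def by (rule LeastI)
qed

lemma del_edge_separates_ends:
  assumes i: "i < length es"
  shows "\<not> (adj (del_edge es i))\<^sup>*\<^sup>* (snd (es ! i)) (fst (es ! i))"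
proof
  let ?R = "adj (del_edge es i)" and ?l = "fst (es ! i)" and ?m = "snd (es ! i)"
  assume "?R\<^sup>*\<^sup>* ?m ?l"
  then obtain xs where path: "rtrancl_path ?R ?m xs ?l" and dist: "distinct (?m # xs)"
    by (metis rtranclp_eq_rtrancl_path rtrancl_path_distinct)
  have lm: "?l < ?m" and edge: "(?l, ?m) \<in> set es"
    using nth_edge_bounds[OF i] nth_mem[OF i] by auto
  have "xs \<noteq> []"
  proof
    assume "xs = []"
    then have "?m = ?l" using path by (auto elim: rtrancl_path.cases)
    then show False using lm by simp
  qed
  then have last: "last xs = ?l" using path by (rule rtrancl_path_last[rotated])
  \<comment> \<open>the deleted edge is the only edge joining l and m, so the path has an inner vertex\<close>
  have "xs \<noteq> [?l]"
  proof
    assume "xs = [?l]"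
    then have "?R ?m ?l" using rtrancl_path_nth[OF path, of 0] by simp
    then show False using edge_bounds[of ?m ?l] lm by (auto simp: adj_def del_edge_def)
  qed
  with \<open>xs \<noteq> []\<close> last have "length (?m # xs) \<ge> 3"
    by (cases xs) (auto simp: Suc_le_eq split: if_splits)
  moreover have "adj es ((?m # xs) ! k) ((?m # xs) ! Suc k)" if "Suc k < length (?m # xs)" for k
    using rtrancl_path_nth[OF path, of k] that adj_del_edge_imp_adj by simp
  moreover have "adj es (last (?m # xs)) (hd (?m # xs))"
    using last \<open>xs \<noteq> []\<close> edge by (simp add: adj_def)
  ultimately have "is_cycle es (?m # xs)" using dist unfolding is_cycle_def by blast
  then show False using is_tree unfolding is_tree_def by blast
qed

lemma del_edge_separates:
  assumes "i < length es" and "{x, y} = {fst (es ! i), snd (es ! i)}"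
  shows "\<not> (adj (del_edge es i))\<^sup>*\<^sup>* x y"
  using del_edge_separates_ends[OF assms(1)] assms(2) symp_rtranclp[OF symp_adj]
  by (metis doubleton_eq_iff sympD)

lemma comp_del_endpoint_cases:
  assumes i: "i < length es" and j: "j < n"
  obtains x y where "{x, y} = {fst (es ! i), snd (es ! i)}" and "j \<in> comp_del n es i x"
proof -
  let ?l = "fst (es ! i)" and ?m = "snd (es ! i)"
  have "(adj es)\<^sup>*\<^sup>* ?l j" using adj_connected nth_edge_bounds[OF i] j by simp
  then have "(adj (del_edge es i))\<^sup>*\<^sup>* ?l j \<or> (adj (del_edge es i))\<^sup>*\<^sup>* ?m j"
    using rtranclp_edge_removed_cases[OF adj_removed_by_del_edge] by blast
  then show ?thesis
    using that[of ?l ?m] that[of ?m ?l] j by (auto simp: comp_del_def insert_commute)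
qed

lemma comp_del_union:
  assumes "i < length es" and "{x, y} = {fst (es ! i), snd (es ! i)}"
  shows "comp_del n es i x \<union> comp_del n es i y = {..<n}"
proof -
  have "j \<in> comp_del n es i x \<union> comp_del n es i y" if "j < n" for j
    using comp_del_endpoint_cases[OF assms(1) that] assms(2) by (metis UnI1 UnI2 doubleton_eq_iff)
  then show ?thesis by (auto simp: comp_del_def)
qed

lemma comp_del_disjoint:
  assumes "i < length es" and "{x, y} = {fst (es ! i), snd (es ! i)}"
  shows "comp_del n es i x \<inter> comp_del n es i y = {}"
proof -
  have "(adj (del_edge es i))\<^sup>*\<^sup>* x y"
    if "(adj (del_edge es i))\<^sup>*\<^sup>* x j" and "(adj (del_edge es i))\<^sup>*\<^sup>* y j" for j
    using that symp_rtranclp[OF symp_adj] by (metis rtranclp_trans sympD)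
  then show ?thesis using del_edge_separates[OF assms] by (auto simp: comp_del_def)
qed

lemma card_comp_del_add:
  assumes "i < length es" and "{x, y} = {fst (es ! i), snd (es ! i)}"
  shows "card (comp_del n es i x) + card (comp_del n es i y) = n"
proof -
  have "card (comp_del n es i x \<union> comp_del n es i y)
      = card (comp_del n es i x) + card (comp_del n es i y)"
    by (rule card_Un_disjoint) (simp_all add: finite_comp_del comp_del_disjoint[OF assms])
  then show ?thesis by (simp add: comp_del_union[OF assms])
qed

lemma gdist_across_edge:
  assumes i: "i < length es" and xy: "{x, y} = {fst (es ! i), snd (es ! i)}"
    and j: "j \<in> comp_del n es i x"
  shows "gdist es j y = Suc (gdist es j x)"
proof -
  have xy_lt: "x < n" "y < n" and "adj es x y"
    using xy nth_edge_bounds[OF i] nth_mem[OF i] by (auto simp: doubleton_eq_iff adj_def)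
  have jn: "j < n" and near: "(adj (del_edge es i))\<^sup>*\<^sup>* x j" using j by (simp_all add: comp_del_def)
  have removed: "{u, v} = {y, x}" if "adj es u v" "\<not> adj (del_edge es i) u v" for u v
    using adj_removed_by_del_edge[OF that] xy by (simp add: insert_commute)
  have separated: "\<not> (adj (del_edge es i))\<^sup>*\<^sup>* y x"
    using del_edge_separates[OF i, of y x] xy by (simp add: insert_commute)
  obtain k where "k < gdist es j y" "(adj es ^^ k) j x"
    using relpowp_crosses_bridge[OF removed symp_adj separated near gdist_walk[OF jn xy_lt(2)]] by blast
  then have "gdist es j x < gdist es j y" unfolding gdist_def by (meson Least_le le_less_trans)
  moreover have "(adj es ^^ Suc (gdist es j x)) j y"
    using gdist_walk[OF jn xy_lt(1)] \<open>adj es x y\<close> by auto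
  then have "gdist es j y \<le> Suc (gdist es j x)" unfolding gdist_def by (rule Least_le)
  ultimately show ?thesis by simp
qed

lemma edist_eq_gdist:
  assumes "i < length es" and "{x, y} = {fst (es ! i), snd (es ! i)}"
    and "j \<in> comp_del n es i x"
  shows "edist es i j = gdist es j x"
  using gdist_across_edge[OF assms] assms(2) by (auto simp: edist_def doubleton_eq_iff)

definition vertex_sign :: "nat \<Rightarrow> real" where
  "vertex_sign v = (-1) ^ gdist es 0 v"

lemma vertex_sign_square: "vertex_sign v * vertex_sign v = 1"
  by (simp add: vertex_sign_def flip: power_mult_distrib)

lemma vertex_sign_edge_ends:
  assumes i: "i < length es"
  shows "vertex_sign (fst (es ! i)) = - vertex_sign (snd (es ! i))"
proof -
  obtain x y where xy: "{x, y} = {fst (es ! i), snd (es ! i)}" and "0 \<in> comp_del n es i x"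
    using comp_del_endpoint_cases[OF i n_pos] .
  then have "gdist es 0 y = Suc (gdist es 0 x)" by (rule gdist_across_edge[OF i])
  then have "vertex_sign y = - vertex_sign x" by (simp add: vertex_sign_def)
  then show ?thesis using xy by (auto simp: doubleton_eq_iff)
qed

lemma vertex_sign_adj: "adj es u v \<Longrightarrow> vertex_sign v = - vertex_sign u"
  unfolding adj_def in_set_conv_nth using vertex_sign_edge_ends
  by (metis fst_conv snd_conv minus_minus)

lemma relpowp_adj_sign: "(adj es ^^ k) u v \<Longrightarrow> (-1) ^ k = vertex_sign u * vertex_sign v"
proof (induction k arbitrary: v)
  case 0
  then show ?case using vertex_sign_square by simp
next
  case (Suc k)
  then obtain w where "(adj es ^^ k) u w" "adj es w v" by auto
  then show ?case using Suc.IH vertex_sign_adj by fastforce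
qed

lemma sign_edist:
  assumes i: "i < length es" and xy: "{x, y} = {fst (es ! i), snd (es ! i)}"
    and j: "j \<in> comp_del n es i x"
  shows "(-1) ^ edist es i j = vertex_sign j * vertex_sign x"
proof -
  have "j < n" "x < n" using j xy nth_edge_bounds[OF i] by (auto simp: comp_del_def doubleton_eq_iff)
  then show ?thesis
    using relpowp_adj_sign[OF gdist_walk] edist_eq_gdist[OF assms] by simp
qed

lemma H_mat_entry:
  assumes i: "i < length es" and xy: "{x, y} = {fst (es ! i), snd (es ! i)}"
    and j: "j \<in> comp_del n es i x"
  shows "H_mat n es $$ (i, j) = vertex_sign j * vertex_sign x * card (comp_del n es i y) / n"
proof -
  have "j < n" using j by (simp add: comp_del_def)
  moreover have "j \<notin> comp_del n es i y" using comp_del_disjoint[OF i xy] j by blast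
  ultimately show ?thesis
    using xy j i sign_edist[OF assms]
    by (auto simp: H_mat_def head_comp_def tail_comp_def doubleton_eq_iff)
qed

lemma sum_mult_incidence_col:
  assumes c: "c < length es"
  shows "(\<Sum>j<n. f j * incidence_mat n es $$ (j, c)) = f (fst (es ! c)) + f (snd (es ! c))"
proof -
  let ?a = "fst (es ! c)" and ?b = "snd (es ! c)"
  have ab: "?a < n" "?b < n" "?a \<noteq> ?b" using nth_edge_bounds[OF c] by auto
  have "(\<Sum>j<n. f j * incidence_mat n es $$ (j, c)) = (\<Sum>j<n. if j \<in> {?a, ?b} then f j else 0)"
    using c by (intro sum.cong) (auto simp: incidence_mat_def)
  also have "\<dots> = sum f ({..<n} \<inter> {?a, ?b})"
    by (simp only: sum.inter_restrict finite_lessThan)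
  also have "{..<n} \<inter> {?a, ?b} = {?a, ?b}" using ab by auto
  finally show ?thesis using ab by simp
qed

lemma H_mult_incidence: "H_mat n es * incidence_mat n es = 1\<^sub>m (length es)"
proof (rule eq_matI)
  fix r c assume "r < dim_row (1\<^sub>m (length es))" "c < dim_col (1\<^sub>m (length es))"
  then have r: "r < length es" and c: "c < length es" by simp_all
  let ?a = "fst (es ! c)" and ?b = "snd (es ! c)"
  have ab: "{?a, ?b} = {fst (es ! c), snd (es ! c)}" "{?b, ?a} = {fst (es ! c), snd (es ! c)}"
    by auto
  have "(H_mat n es * incidence_mat n es) $$ (r, c)
      = (\<Sum>j<n. H_mat n es $$ (r, j) * incidence_mat n es $$ (j, c))"
    using r c by (simp add: H_mat_def incidence_mat_def scalar_prod_def atLeast0LessThan)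
  also have "\<dots> = H_mat n es $$ (r, ?a) + H_mat n es $$ (r, ?b)"
    by (rule sum_mult_incidence_col[OF c])
  also have "\<dots> = 1\<^sub>m (length es) $$ (r, c)"
  proof (cases "r = c")
    case True
    have "?a \<in> comp_del n es r ?a" "?b \<in> comp_del n es r ?b"
      using nth_edge_bounds[OF c] by (auto simp: comp_del_def)
    then have "H_mat n es $$ (r, ?a) + H_mat n es $$ (r, ?b)
        = (card (comp_del n es r ?b) + card (comp_del n es r ?a)) / n"
      using H_mat_entry[OF r] ab True vertex_sign_square by (simp add: add_divide_distrib)
    also have "\<dots> = 1" using card_comp_del_add[OF r] ab True n_pos by simp
    finally show ?thesis using True r by simp
  next
    case False
    obtain x y where xy: "{x, y} = {fst (es ! r), snd (es ! r)}" and a: "?a \<in> comp_del n es r x"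
      using comp_del_endpoint_cases[OF r] nth_edge_bounds[OF c] by (metis order.strict_trans)
    have "adj (del_edge es r) ?a ?b"
      using adj_del_edge_other c r False is_tree by (simp add: is_tree_def)
    then have b: "?b \<in> comp_del n es r x"
      using a nth_edge_bounds[OF c] by (auto simp: comp_del_def intro: rtranclp.rtrancl_into_rtrancl)
    show ?thesis
      using H_mat_entry[OF r xy a] H_mat_entry[OF r xy b] vertex_sign_edge_ends[OF c] False r c
      by (simp add: field_simps)
  qed
  finally show "(H_mat n es * incidence_mat n es) $$ (r, c) = 1\<^sub>m (length es) $$ (r, c)" .
qed (simp_all add: H_mat_def incidence_mat_def)

lemma H_mult_vertex_sign: "H_mat n es *\<^sub>v vec n vertex_sign = 0\<^sub>v (length es)"
proof (rule eq_vecI)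
  fix r assume "r < dim_vec (0\<^sub>v (length es))"
  then have r: "r < length es" by simp
  let ?l = "fst (es ! r)" and ?m = "snd (es ! r)"
  let ?L = "comp_del n es r ?l" and ?M = "comp_del n es r ?m"
  have lm: "{?l, ?m} = {fst (es ! r), snd (es ! r)}" and ml: "{?m, ?l} = {fst (es ! r), snd (es ! r)}"
    by auto
  have "(H_mat n es *\<^sub>v vec n vertex_sign) $ r = (\<Sum>j<n. H_mat n es $$ (r, j) * vertex_sign j)"
    using r by (simp add: H_mat_def scalar_prod_def atLeast0LessThan)
  also have "\<dots> = (\<Sum>j\<in>?L. H_mat n es $$ (r, j) * vertex_sign j)
      + (\<Sum>j\<in>?M. H_mat n es $$ (r, j) * vertex_sign j)"
    unfolding comp_del_union[OF r lm, symmetric]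
    by (rule sum.union_disjoint) (simp_all add: finite_comp_del comp_del_disjoint[OF r lm])
  also have "\<dots> = (\<Sum>j\<in>?L. vertex_sign ?l * card ?M / n) + (\<Sum>j\<in>?M. vertex_sign ?m * card ?L / n)"
    using H_mat_entry[OF r lm] H_mat_entry[OF r ml] vertex_sign_square
    by (intro arg_cong2[where f = "(+)"] sum.cong) (simp_all add: algebra_simps)
  also have "\<dots> = 0"
    using vertex_sign_edge_ends[OF r] by (simp add: algebra_simps)
  finally show "(H_mat n es *\<^sub>v vec n vertex_sign) $ r = 0\<^sub>v (length es) $ r"
    using r by simp
qed (simp add: H_mat_def)

lemma incidence_mult_vertex_sign:
  "transpose_mat (incidence_mat n es) *\<^sub>v vec n vertex_sign = 0\<^sub>v (length es)"
proof (rule eq_vecI)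
  fix c assume "c < dim_vec (0\<^sub>v (length es))"
  then have c: "c < length es" by simp
  have "(transpose_mat (incidence_mat n es) *\<^sub>v vec n vertex_sign) $ c
      = (\<Sum>j<n. vertex_sign j * incidence_mat n es $$ (j, c))"
    using c by (simp add: incidence_mat_def scalar_prod_def atLeast0LessThan mult.commute)
  also have "\<dots> = 0"
    using sum_mult_incidence_col[OF c] vertex_sign_edge_ends[OF c] by simp
  finally show "(transpose_mat (incidence_mat n es) *\<^sub>v vec n vertex_sign) $ c = 0\<^sub>v (length es) $ c"
    using c by simp
qed (simp add: incidence_mat_def)

lemma vertex_sign_scalar_prod_self: "vec n vertex_sign \<bullet> vec n vertex_sign = n"
  by (simp add: scalar_prod_def vertex_sign_square)

end

theorem mainTheorem2:
  fixes n :: nat and es :: "(nat \<times> nat) list"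
  assumes "is_tree n es" and "length es = n - 1"
  shows "is_moore_penrose_inverse (incidence_mat n es) (H_mat n es)"
proof -
  interpret tree n es by (rule tree.intro) (fact assms(1))
  let ?M = "incidence_mat n es" and ?H = "H_mat n es" and ?s = "vec n vertex_sign"
  have M: "?M \<in> carrier_mat n (length es)" and H: "?H \<in> carrier_mat (length es) n"
    by (simp_all add: incidence_mat_def H_mat_def)
  have n: "n = Suc (length es)" using assms(2) n_pos by simp
  have "?s \<bullet> ?s \<noteq> 0" using vertex_sign_scalar_prod_self n_pos by simp
  then have "?M * ?H = 1\<^sub>m n - mat n n (\<lambda>(u, v). ?s $ u * ?s $ v / (?s \<bullet> ?s))"
    by (rule mult_left_inverse_eq_one_minus_projection[OF M H n H_mult_incidence
          H_mult_vertex_sign incidence_mult_vertex_sign vec_carrier])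
  then have "transpose_mat (?M * ?H) = ?M * ?H"
    by (intro eq_matI) (auto simp: mult.commute)
  then show ?thesis by (rule moore_penrose_of_left_inverse[OF M H H_mult_incidence])
qed

end
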